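(* Let $A$ be a finite-dimensional algebra (not necessarily associative) over an algebraically closed field $K$, let $\delta,\gamma\in K$, and let $D$ be a $(\delta,\gamma)$-derivation of $A$, with root space decomposition $A=\bigoplus_{\lambda}A_\lambda$. Suppose there are roots $\lambda,\mu,\eta,\theta,\xi$ of $D$ (not necessarily distinct) such that $$0\ne A_\lambda A_\eta\subseteq A_\theta,\quad A_\theta A_\mu\ne 0,\qquad 0\ne A_\eta A_\mu\subseteq A_\xi,\quad A_\lambda A_\xi\ne 0,$$ and $(\delta^2-\delta)\lambda\ne(\gamma^2-\gamma)\mu$. Then the root space decomposition of $A$ with respect to $D$ is a non-semigroup grading of $A$.
   Context: An algebra means a vector space $A$ with a bilinear multiplication, with no identities assumed. For fixed $\delta,\gamma\in K$, a $(\delta,\gamma)$-derivation of $A$ is a linear map $D:A\to A$ with $D(xy)=\delta D(x)y+\gamma xD(y)$ for all $x,y\in A$. The root space decomposition with respect to $D$ is $A=\bigoplus_\lambda A_\lambda$ over the eigenvalues (roots) $\lambda$ of $D$, where $A_\lambda$ is the generalized eigenspace of $D$ for $\lambda$. A grading of $A$ over a set $\Gamma$ is a decomposition $A=\bigoplus_{g\in\Gamma}A_g$ together with a partial binary operation $*$ on $\Gamma$, defined for exactly those pairs $(g,h)$ with $A_gA_h\ne0$, such that $A_gA_h\subseteq A_{g*h}$ in that case. The grading is a semigroup grading if there is a semigroup $(G,\cdot)$ and an injective map $\Gamma\to G$ under which $g*h=g\cdot h$ whenever $A_gA_h\ne0$; otherwise it is a non-semigroup grading. *)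

theory Defs
  imports Main "HOL-Computational_Algebra.Polynomial"
begin

definition alg_closed :: "'k::field itself \<Rightarrow> bool" where
  "alg_closed _ \<longleftrightarrow> (\<forall>p::'k poly. 0 < degree p \<longrightarrow> (\<exists>x. poly p x = 0))"

definition fin_dim_vs :: "('k::field \<Rightarrow> 'a::ab_group_add \<Rightarrow> 'a) \<Rightarrow> bool" where
  "fin_dim_vs scale \<longleftrightarrow> vector_space scale \<and>
     (\<exists>B. finite B \<and> module.span scale B = UNIV)"

definition bilinear_mult :: "('k::field \<Rightarrow> 'a::ab_group_add \<Rightarrow> 'a) \<Rightarrow> ('a \<Rightarrow> 'a \<Rightarrow> 'a) \<Rightarrow> bool" where
  "bilinear_mult scale mul \<longleftrightarrow>
     (\<forall>x. Vector_Spaces.linear scale scale (mul x)) \<and>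
     (\<forall>y. Vector_Spaces.linear scale scale (\<lambda>x. mul x y))"

definition dg_derivation :: "('k::field \<Rightarrow> 'a::ab_group_add \<Rightarrow> 'a) \<Rightarrow> ('a \<Rightarrow> 'a \<Rightarrow> 'a)
    \<Rightarrow> 'k \<Rightarrow> 'k \<Rightarrow> ('a \<Rightarrow> 'a) \<Rightarrow> bool" where
  "dg_derivation scale mul \<delta> \<gamma> D \<longleftrightarrow>
     Vector_Spaces.linear scale scale D \<and>
     (\<forall>x y. D (mul x y) = scale \<delta> (mul (D x) y) + scale \<gamma> (mul x (D y)))"

definition gen_eigenspace :: "('k::field \<Rightarrow> 'a::ab_group_add \<Rightarrow> 'a) \<Rightarrow> ('a \<Rightarrow> 'a) \<Rightarrow> 'k \<Rightarrow> 'a set" where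
  "gen_eigenspace scale D l = {x. \<exists>n. ((\<lambda>v. D v - scale l v) ^^ n) x = 0}"

definition is_root :: "('k::field \<Rightarrow> 'a::ab_group_add \<Rightarrow> 'a) \<Rightarrow> ('a \<Rightarrow> 'a) \<Rightarrow> 'k \<Rightarrow> bool" where
  "is_root scale D l \<longleftrightarrow> (\<exists>x. x \<noteq> 0 \<and> D x = scale l x)"

definition roots :: "('k::field \<Rightarrow> 'a::ab_group_add \<Rightarrow> 'a) \<Rightarrow> ('a \<Rightarrow> 'a) \<Rightarrow> 'k set" where
  "roots scale D = {l. is_root scale D l}"

definition subsp_prod :: "('k::field \<Rightarrow> 'a::ab_group_add \<Rightarrow> 'a) \<Rightarrow> ('a \<Rightarrow> 'a \<Rightarrow> 'a)
    \<Rightarrow> 'a set \<Rightarrow> 'a set \<Rightarrow> 'a set" where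
  "subsp_prod scale mul U V = module.span scale {mul x y | x y. x \<in> U \<and> y \<in> V}"

text \<open>A grading over the index set G with components V: direct sum decomposition of the
  space, each component a subspace, and every nonzero product V g V h lies in some V k.
  (The partial operation g*h is then the index k, unique by directness when V k \<noteq> 0.)\<close>
definition is_grading :: "('k::field \<Rightarrow> 'a::ab_group_add \<Rightarrow> 'a) \<Rightarrow> ('a \<Rightarrow> 'a \<Rightarrow> 'a)
    \<Rightarrow> 'g set \<Rightarrow> ('g \<Rightarrow> 'a set) \<Rightarrow> bool" where
  "is_grading scale mul G V \<longleftrightarrow>
     (\<forall>g\<in>G. module.subspace scale (V g)) \<and>
     module.span scale (\<Union>g\<in>G. V g) = UNIV \<and>
     (\<forall>S x. finite S \<and> S \<subseteq> G \<and> (\<forall>g\<in>S. x g \<in> V g) \<and> sum x S = 0 \<longrightarrow> (\<forall>g\<in>S. x g = 0)) \<and>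
     (\<forall>g\<in>G. \<forall>h\<in>G. subsp_prod scale mul (V g) (V h) \<noteq> {0} \<longrightarrow>
        (\<exists>k\<in>G. subsp_prod scale mul (V g) (V h) \<subseteq> V k))"

definition is_semigroup :: "'s set \<Rightarrow> ('s \<Rightarrow> 's \<Rightarrow> 's) \<Rightarrow> bool" where
  "is_semigroup S op \<longleftrightarrow> (\<forall>a\<in>S. \<forall>b\<in>S. op a b \<in> S) \<and>
     (\<forall>a\<in>S. \<forall>b\<in>S. \<forall>c\<in>S. op (op a b) c = op a (op b c))"

definition realized_in_semigroup :: "('k::field \<Rightarrow> 'a::ab_group_add \<Rightarrow> 'a) \<Rightarrow> ('a \<Rightarrow> 'a \<Rightarrow> 'a)
    \<Rightarrow> 'g set \<Rightarrow> ('g \<Rightarrow> 'a set) \<Rightarrow> 's set \<Rightarrow> ('s \<Rightarrow> 's \<Rightarrow> 's) \<Rightarrow> ('g \<Rightarrow> 's) \<Rightarrow> bool" where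
  "realized_in_semigroup scale mul G V S op \<phi> \<longleftrightarrow>
     is_semigroup S op \<and> inj_on \<phi> G \<and> \<phi> ` G \<subseteq> S \<and>
     (\<forall>g\<in>G. \<forall>h\<in>G. \<forall>k\<in>G. subsp_prod scale mul (V g) (V h) \<noteq> {0} \<and>
        subsp_prod scale mul (V g) (V h) \<subseteq> V k \<longrightarrow> \<phi> k = op (\<phi> g) (\<phi> h))"

end

theory Submission
  imports Defs
begin

text \<open>
  Since \<open>D\<close> is a \<open>(\<delta>,\<gamma>)\<close>-derivation, \<open>D - (\<delta> g + \<gamma> h)\<close> acts on a product \<open>x y\<close> like a
  Leibniz rule, \<open>\<delta> (D - g) x \<cdot> y + \<gamma> x \<cdot> (D - h) y\<close>; hence \<open>A\<^sub>g A\<^sub>h \<subseteq> A\<^bsub>\<delta> g + \<gamma> h\<^esub>\<close>, and over an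
  algebraically closed field the root spaces form a grading with \<open>g * h = \<delta> g + \<gamma> h\<close>.
  In a semigroup realisation, the two bracketings of \<open>\<lambda> \<cdot> \<eta> \<cdot> \<mu>\<close> would have to give the same root.
  They give \<open>\<delta> \<theta> + \<gamma> \<mu> = \<delta>\<^sup>2 \<lambda> + \<delta> \<gamma> \<eta> + \<gamma> \<mu>\<close> and \<open>\<delta> \<lambda> + \<gamma> \<xi> = \<delta> \<lambda> + \<gamma> \<delta> \<eta> + \<gamma>\<^sup>2 \<mu>\<close>,
  which differ precisely because \<open>(\<delta>\<^sup>2 - \<delta>) \<lambda> \<noteq> (\<gamma>\<^sup>2 - \<gamma>) \<mu>\<close>.
\<close>

lemma linear_power_bezout:
  fixes q :: "'k::field poly"
  assumes "poly q a \<noteq> 0"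
  shows "\<exists>r s. r * [:-a, 1:] ^ m + s * q = 1"
proof (induction m)
  case 0
  show ?case by (rule exI[of _ 1], rule exI[of _ 0]) simp
next
  case (Suc m)
  then obtain r s where rs: "r * [:-a, 1:] ^ m + s * q = 1" by blast
  define c where "c = poly q a"
  have q_eq: "[:-a, 1:] * synthetic_div q a + [:c:] = q"
    unfolding c_def by (rule synthetic_div_correct')
  have q_rem: "q - [:-a, 1:] * synthetic_div q a = [:c:]"
    using q_eq by (simp add: algebra_simps)
  define r1 where "r1 = - smult (1/c) (synthetic_div q a)"
  define s1 where "s1 = [:1/c:]"
  have "r1 * [:-a, 1:] + s1 * q = smult (1/c) (q - [:-a, 1:] * synthetic_div q a)"
    unfolding r1_def s1_def by (simp add: algebra_simps smult_diff_right smult_add_right)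
  also have "\<dots> = 1"
    using assms by (simp only: q_rem) (simp add: c_def one_pCons)
  finally have rs1: "r1 * [:-a, 1:] + s1 * q = 1" .
  have "(r * r1) * [:-a, 1:] ^ Suc m + (r * s1 * [:-a, 1:] ^ m + s * r1 * [:-a, 1:] + s * s1 * q) * q
      = (r * [:-a, 1:] ^ m + s * q) * (r1 * [:-a, 1:] + s1 * q)"
    by (simp add: algebra_simps)
  also have "\<dots> = 1" using rs rs1 by simp
  finally show ?case by blast
qed

context vector_space
begin

lemma finite_dim_family_dependent:
  assumes "finite B" "span B = UNIV"
  shows "\<exists>c. (\<exists>k\<le>card B. c k \<noteq> 0) \<and> (\<Sum>k\<le>card B. c k *s f k) = 0"
proof (cases "inj_on f {..card B}")
  case False
  then obtain i j where ij: "i \<le> card B" "j \<le> card B" "i \<noteq> j" "f i = f j"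
    unfolding inj_on_def by auto
  define c where "c k = (if k = i then 1 else if k = j then -1 else (0::'a))" for k
  have "(\<Sum>k\<le>card B. c k *s f k) = (\<Sum>k\<le>card B. (if k = i then f i else 0) - (if k = j then f j else 0))"
    using ij by (intro sum.cong) (auto simp: c_def)
  also have "\<dots> = 0" using ij by (simp add: sum_subtractf)
  finally have "(\<Sum>k\<le>card B. c k *s f k) = 0" .
  moreover have "c i \<noteq> 0" by (simp add: c_def)
  ultimately show ?thesis using ij(1) by (intro exI[of _ c]) blast
next
  case True
  have "card (f ` {..card B}) = Suc (card B)" using card_image[OF True] by simp
  then have "dependent (f ` {..card B})"
    using independent_span_bound[OF assms(1), of "f ` {..card B}"] assms(2) by auto
  then obtain t u where t: "finite t" "t \<subseteq> f ` {..card B}" "(\<Sum>w\<in>t. u w *s w) = 0" "\<exists>w\<in>t. u w \<noteq> 0"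
    unfolding dependent_explicit by blast
  define c where "c k = (if f k \<in> t then u (f k) else 0)" for k
  define g where "g w = (if w \<in> t then u w *s w else 0)" for w
  have "(\<Sum>k\<le>card B. c k *s f k) = (\<Sum>k\<le>card B. g (f k))"
    unfolding c_def g_def by (rule sum.cong) auto
  also have "\<dots> = sum g (f ` {..card B})"
    by (simp add: sum.reindex[OF True])
  also have "\<dots> = sum g t"
    using t(2) by (intro sum.mono_neutral_right) (auto simp: g_def)
  also have "\<dots> = (\<Sum>w\<in>t. u w *s w)"
    by (simp add: g_def)
  finally have "(\<Sum>k\<le>card B. c k *s f k) = 0" using t(3) by simp
  moreover obtain w where "w \<in> t" "u w \<noteq> 0" using t(4) by blast
  then obtain k where "k \<le> card B" "c k \<noteq> 0" using t(2) by (auto simp: c_def)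
  ultimately show ?thesis by blast
qed

end

locale linear_operator = vector_space scale
  for scale :: "'k::field \<Rightarrow> 'a::ab_group_add \<Rightarrow> 'a" (infixr \<open>*s\<close> 75) +
  fixes D :: "'a \<Rightarrow> 'a"
  assumes linear_D: "Vector_Spaces.linear scale scale D"
begin

sublocale vector_space_pair scale scale ..

definition shift :: "'k \<Rightarrow> 'a \<Rightarrow> 'a" where
  "shift l v = D v - l *s v"

lemma linear_shift: "Vector_Spaces.linear scale scale (shift l)"
  unfolding shift_def
  by (intro linear_compose_sub linear_D linear_compose_scale_right linear_ident)

lemma linear_shift_power: "Vector_Spaces.linear scale scale (shift l ^^ n)"
proof (induction n)
  case (Suc n)
  show ?case unfolding funpow.simps(2) by (rule Vector_Spaces.linear_compose[OF Suc.IH linear_shift])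
qed (simp add: linear_ident)

lemmas shift_power_0 = linear_0[OF linear_shift_power]
  and shift_power_add = linear_add[OF linear_shift_power]
  and shift_power_scale = linear_scale[OF linear_shift_power]

lemma shift_commute: "shift a (shift b x) = shift b (shift a x)"
  by (simp add: shift_def linear_diff[OF linear_D] linear_scale[OF linear_D] algebra_simps)

lemma shift_power_commute: "(shift b ^^ n) (shift a x) = shift a ((shift b ^^ n) x)"
  by (induction n) (simp_all add: shift_commute)

lemma shift_power_Suc: "(shift l ^^ Suc n) x = (shift l ^^ n) (shift l x)"
  by (simp only: funpow_Suc_right comp_def)

lemma mem_gen_eigenspace_iff: "x \<in> gen_eigenspace scale D l \<longleftrightarrow> (\<exists>n. (shift l ^^ n) x = 0)"
proof -
  have "(\<lambda>v. D v - l *s v) = shift l" by (simp add: shift_def fun_eq_iff)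
  then show ?thesis by (simp add: gen_eigenspace_def)
qed

lemma shift_power_mono: "(shift l ^^ n) x = 0 \<Longrightarrow> n \<le> m \<Longrightarrow> (shift l ^^ m) x = 0"
  by (metis funpow_add le_add_diff_inverse2 o_apply shift_power_0)

lemma subspace_gen_eigenspace: "subspace (gen_eigenspace scale D l)"
proof (rule subspaceI)
  fix x y assume "x \<in> gen_eigenspace scale D l" "y \<in> gen_eigenspace scale D l"
  then obtain n m where "(shift l ^^ n) x = 0" "(shift l ^^ m) y = 0"
    by (auto simp: mem_gen_eigenspace_iff)
  then have "(shift l ^^ max n m) x = 0" "(shift l ^^ max n m) y = 0"
    by (auto intro: shift_power_mono)
  then have "(shift l ^^ max n m) (x + y) = 0" by (simp add: shift_power_add)
  then show "x + y \<in> gen_eigenspace scale D l" by (auto simp: mem_gen_eigenspace_iff)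
qed (auto simp: mem_gen_eigenspace_iff shift_power_scale intro: exI[of _ 0])

lemma shift_power_gen_eigenspace:
  "x \<in> gen_eigenspace scale D b \<Longrightarrow> (shift a ^^ m) x \<in> gen_eigenspace scale D b"
proof (induction m)
  case (Suc m)
  then obtain n where "(shift b ^^ n) ((shift a ^^ m) x) = 0" by (auto simp: mem_gen_eigenspace_iff)
  then have "(shift b ^^ n) ((shift a ^^ Suc m) x) = 0"
    by (simp add: shift_power_commute linear_0[OF linear_shift])
  then show ?case by (auto simp: mem_gen_eigenspace_iff)
qed simp

lemma gen_eigenspace_shift_power_eq_0:
  assumes "x \<in> gen_eigenspace scale D b" "(shift a ^^ N) x = 0" "a \<noteq> b"
  shows "x = 0"
  using assms(1,2)
proof (induction N arbitrary: x)
  case (Suc N)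
  have "shift a x \<in> gen_eigenspace scale D b"
    using shift_power_gen_eigenspace[OF Suc.prems(1), where m = 1] by simp
  moreover have "(shift a ^^ N) (shift a x) = 0" using Suc.prems(2) by (simp only: shift_power_Suc)
  ultimately have "shift a x = 0" by (rule Suc.IH)
  then have eig: "shift b x = (a - b) *s x" by (simp add: shift_def algebra_simps)
  have "(shift b ^^ n) x = (a - b) ^ n *s x" for n
    by (induction n) (simp_all add: eig linear_scale[OF linear_shift] mult.commute)
  moreover obtain n where "(shift b ^^ n) x = 0" using Suc.prems(1) by (auto simp: mem_gen_eigenspace_iff)
  ultimately show ?case using assms(3) by simp
qed simp

lemma gen_eigenspace_disjoint:
  "x \<in> gen_eigenspace scale D a \<Longrightarrow> x \<in> gen_eigenspace scale D b \<Longrightarrow> a \<noteq> b \<Longrightarrow> x = 0"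
  by (metis gen_eigenspace_shift_power_eq_0 mem_gen_eigenspace_iff)

lemma gen_eigenspaces_independent:
  assumes "finite S" "\<forall>g\<in>S. x g \<in> gen_eigenspace scale D g" "sum x S = 0"
  shows "\<forall>g\<in>S. x g = 0"
  using assms
proof (induction S arbitrary: x rule: finite_induct)
  case (insert a F)
  then have xa: "x a = - sum x F" by (simp add: eq_neg_iff_add_eq_0)
  obtain N where N: "(shift a ^^ N) (x a) = 0"
    using insert.prems(1) by (auto simp: mem_gen_eigenspace_iff)
  have "(\<Sum>g\<in>F. (shift a ^^ N) (x g)) = 0"
    using N by (simp add: xa linear_neg[OF linear_shift_power] linear_sum[OF linear_shift_power])
  then have "\<forall>g\<in>F. (shift a ^^ N) (x g) = 0"
    using insert.prems(1) by (intro insert.IH) (auto intro: shift_power_gen_eigenspace)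
  then have F0: "\<forall>g\<in>F. x g = 0"
    using insert.prems(1) insert.hyps(2) gen_eigenspace_shift_power_eq_0 by (metis insertCI)
  then show ?case using xa by simp
qed simp

lemma root_if_gen_eigenspace:
  assumes "x \<in> gen_eigenspace scale D l" "x \<noteq> 0"
  shows "l \<in> roots scale D"
proof -
  define n where "n = (LEAST n. (shift l ^^ n) x = 0)"
  have n: "(shift l ^^ n) x = 0"
    using assms(1) unfolding n_def mem_gen_eigenspace_iff by (rule LeastI_ex)
  then obtain m where m: "n = Suc m" using assms(2) by (cases n) auto
  then have "(shift l ^^ m) x \<noteq> 0" using not_less_Least[of m "\<lambda>n. (shift l ^^ n) x = 0"] n_def by auto
  moreover have "shift l ((shift l ^^ m) x) = 0" using n m by simp
  ultimately show ?thesis by (auto simp: roots_def is_root_def shift_def)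
qed

lemma linear_D_power: "Vector_Spaces.linear scale scale (D ^^ n)"
proof (induction n)
  case (Suc n)
  show ?case unfolding funpow.simps(2) by (rule Vector_Spaces.linear_compose[OF Suc.IH linear_D])
qed (simp add: linear_ident)

definition poly_op :: "'k poly \<Rightarrow> 'a \<Rightarrow> 'a" where
  "poly_op p x = (\<Sum>i\<le>degree p. coeff p i *s (D ^^ i) x)"

lemma poly_op_eq_sum: "degree p \<le> n \<Longrightarrow> poly_op p x = (\<Sum>i\<le>n. coeff p i *s (D ^^ i) x)"
  unfolding poly_op_def by (rule sum.mono_neutral_left) (auto simp: coeff_eq_0)

lemma poly_op_add: "poly_op (p + q) x = poly_op p x + poly_op q x"
proof -
  let ?n = "max (degree p) (degree q)"
  have "degree (p + q) \<le> ?n" by (rule degree_add_le) auto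
  then show ?thesis by (simp add: poly_op_eq_sum[of _ ?n] scale_left_distrib sum.distrib)
qed

lemma poly_op_smult: "poly_op (smult c p) x = c *s poly_op p x"
  by (simp add: poly_op_eq_sum[OF degree_smult_le] poly_op_def scale_sum_right)

lemma poly_op_pCons: "poly_op (pCons c p) x = c *s x + D (poly_op p x)"
proof -
  have "poly_op (pCons c p) x = (\<Sum>i\<le>Suc (degree p). coeff (pCons c p) i *s (D ^^ i) x)"
    by (rule poly_op_eq_sum) (rule degree_pCons_le)
  also have "\<dots> = c *s x + (\<Sum>i\<le>degree p. coeff p i *s D ((D ^^ i) x))"
    by (subst sum.atMost_Suc_shift) simp
  also have "(\<Sum>i\<le>degree p. coeff p i *s D ((D ^^ i) x)) = D (poly_op p x)"
    by (simp add: poly_op_def linear_sum[OF linear_D] linear_scale[OF linear_D])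
  finally show ?thesis .
qed

lemma poly_op_mult: "poly_op (p * q) x = poly_op p (poly_op q x)"
proof (induction p rule: pCons_induct)
  case (pCons a p)
  have "poly_op (pCons a p * q) x = a *s poly_op q x + (0 *s x + D (poly_op (p * q) x))"
    by (simp only: mult_pCons_left poly_op_add poly_op_smult poly_op_pCons)
  also have "\<dots> = poly_op (pCons a p) (poly_op q x)" using pCons by (simp add: poly_op_pCons)
  finally show ?case .
qed (simp add: poly_op_def)

lemma poly_op_1: "poly_op 1 x = x"
  by (simp add: one_pCons poly_op_pCons poly_op_def linear_0[OF linear_D])

lemma poly_op_0_right: "poly_op p 0 = 0"
  by (simp add: poly_op_def linear_0[OF linear_D_power])

lemma poly_op_linear_power: "poly_op ([:-a, 1:] ^ m) x = (shift a ^^ m) x"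
proof (induction m arbitrary: x)
  case (Suc m)
  have "poly_op [:-a, 1:] y = shift a y" for y
    by (simp add: poly_op_pCons poly_op_def linear_0[OF linear_D] shift_def)
  with Suc show ?case by (simp only: power_Suc poly_op_mult funpow.simps comp_def)
qed (simp add: poly_op_1)

lemma annihilating_poly_exists:
  assumes "finite B" "span B = UNIV"
  shows "\<exists>p. p \<noteq> 0 \<and> poly_op p v = 0"
proof -
  obtain c where c: "\<exists>k\<le>card B. c k \<noteq> 0" "(\<Sum>k\<le>card B. c k *s (D ^^ k) v) = 0"
    using finite_dim_family_dependent[OF assms, of "\<lambda>k. (D ^^ k) v"] by blast
  define p where "p = (\<Sum>i\<le>card B. monom (c i) i)"
  have coeff_p: "coeff p j = (if j \<le> card B then c j else 0)" for j
    unfolding p_def by (simp add: coeff_sum coeff_monom)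
  have "degree p \<le> card B" by (rule degree_le) (simp add: coeff_p)
  then have "poly_op p v = 0" using c(2) by (simp add: poly_op_eq_sum coeff_p)
  moreover have "p \<noteq> 0" using c(1) coeff_p by (metis coeff_0)
  ultimately show ?thesis by blast
qed

text \<open>From \<open>r (x - a)\<^sup>m + s q = 1\<close> we get \<open>v = (s q)(D) v + (r (x - a)\<^sup>m)(D) v\<close>.\<close>
lemma primary_decomposition_step:
  assumes "poly_op ([:-a, 1:] ^ m * q) v = 0" "poly q a \<noteq> 0"
  obtains u w where "v = u + w" "u \<in> gen_eigenspace scale D a" "poly_op q w = 0"
proof -
  obtain r s where rs: "r * [:-a, 1:] ^ m + s * q = 1"
    using linear_power_bezout[OF assms(2)] by blast
  have "(shift a ^^ m) (poly_op (s * q) v) = poly_op (s * ([:-a, 1:] ^ m * q)) v"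
    by (simp add: poly_op_linear_power[symmetric] poly_op_mult[symmetric] algebra_simps)
  then have "poly_op (s * q) v \<in> gen_eigenspace scale D a"
    using assms(1) by (auto simp: mem_gen_eigenspace_iff poly_op_mult poly_op_0_right)
  moreover have "poly_op q (poly_op (r * [:-a, 1:] ^ m) v) = poly_op (r * ([:-a, 1:] ^ m * q)) v"
    by (simp add: poly_op_mult[symmetric] algebra_simps)
  then have "poly_op q (poly_op (r * [:-a, 1:] ^ m) v) = 0"
    using assms(1) by (simp add: poly_op_mult poly_op_0_right)
  moreover have "v = poly_op (s * q) v + poly_op (r * [:-a, 1:] ^ m) v"
    using rs poly_op_1[of v] by (metis add.commute poly_op_add)
  ultimately show ?thesis using that by blast
qed

lemma annihilated_in_span_gen_eigenspaces:
  assumes "alg_closed TYPE('k)" "p \<noteq> 0" "poly_op p v = 0"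
  shows "v \<in> span (\<Union>l\<in>roots scale D. gen_eigenspace scale D l)"
  using assms(2,3)
proof (induction "degree p" arbitrary: p v rule: less_induct)
  case less
  show ?case
  proof (cases "degree p = 0")
    case True
    then have "coeff p 0 *s v = 0" using less.prems(2) by (simp add: poly_op_def)
    moreover have "coeff p 0 \<noteq> 0" using True less.prems(1) by (metis leading_coeff_0_iff)
    ultimately show ?thesis by (simp add: span_zero)
  next
    case False
    then obtain a where "poly p a = 0" using assms(1) by (auto simp: alg_closed_def)
    obtain q where p: "p = [:-a, 1:] ^ order a p * q" and "\<not> [:-a, 1:] dvd q"
      using order_decomp[OF less.prems(1)] by blast
    then have "poly q a \<noteq> 0" by (simp add: poly_eq_0_iff_dvd)
    then obtain u w where vuw: "v = u + w" "u \<in> gen_eigenspace scale D a" "poly_op q w = 0"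
      using primary_decomposition_step less.prems(2) p by metis
    have "order a p \<noteq> 0" using \<open>poly p a = 0\<close> less.prems(1) order_root by blast
    moreover have "q \<noteq> 0" using p less.prems(1) by auto
    moreover have "degree p = order a p + degree q"
      by (subst p) (simp add: degree_mult_eq degree_linear_power \<open>q \<noteq> 0\<close>)
    ultimately have "degree q < degree p" by simp
    then have "w \<in> span (\<Union>l\<in>roots scale D. gen_eigenspace scale D l)"
      using less.hyps \<open>q \<noteq> 0\<close> vuw(3) by blast
    moreover have "u \<in> span (\<Union>l\<in>roots scale D. gen_eigenspace scale D l)"
      using vuw(2) root_if_gen_eigenspace[OF vuw(2)] by (cases "u = 0") (auto intro: span_zero span_base)
    ultimately show ?thesis using vuw(1) by (simp add: span_add)
  qed
qed

lemma span_gen_eigenspaces: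
  assumes "alg_closed TYPE('k)" "finite B" "span B = UNIV"
  shows "span (\<Union>l\<in>roots scale D. gen_eigenspace scale D l) = UNIV"
  using annihilating_poly_exists[OF assms(2,3)] annihilated_in_span_gen_eigenspaces[OF assms(1)]
  by blast

end

locale dg_derivation_algebra = vector_space scale
  for scale :: "'k::field \<Rightarrow> 'a::ab_group_add \<Rightarrow> 'a" (infixr \<open>*s\<close> 75) +
  fixes mul :: "'a \<Rightarrow> 'a \<Rightarrow> 'a" and \<delta> \<gamma> :: 'k and D :: "'a \<Rightarrow> 'a"
  assumes bilinear: "bilinear_mult scale mul"
    and derivation: "dg_derivation scale mul \<delta> \<gamma> D"
begin

sublocale linear_operator scale D
  using derivation by unfold_locales (auto simp: dg_derivation_def Vector_Spaces.linear_iff)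

lemma linear_mul_left: "Vector_Spaces.linear scale scale (mul x)"
  using bilinear by (simp add: bilinear_mult_def)

lemma linear_mul_right: "Vector_Spaces.linear scale scale (\<lambda>x. mul x y)"
  using bilinear by (simp add: bilinear_mult_def)

lemma mul_zero_left: "mul 0 y = 0"
  using linear_0[OF linear_mul_right] .

lemma mul_zero_right: "mul x 0 = 0"
  using linear_0[OF linear_mul_left] .

lemma shift_mul: "shift (\<delta> * g + \<gamma> * h) (mul x y) = \<delta> *s mul (shift g x) y + \<gamma> *s mul x (shift h y)"
proof -
  have left: "mul (shift g x) y = mul (D x) y - g *s mul x y"
    by (simp add: shift_def linear_diff[OF linear_mul_right] linear_scale[OF linear_mul_right])
  have right: "mul x (shift h y) = mul x (D y) - h *s mul x y"
    by (simp add: shift_def linear_diff[OF linear_mul_left] linear_scale[OF linear_mul_left])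
  have "shift (\<delta> * g + \<gamma> * h) (mul x y) = D (mul x y) - (\<delta> * g + \<gamma> * h) *s mul x y"
    by (simp add: shift_def)
  also have "\<dots> = \<delta> *s (mul (D x) y - g *s mul x y) + \<gamma> *s (mul x (D y) - h *s mul x y)"
    using derivation by (simp add: dg_derivation_def algebra_simps)
  finally show ?thesis by (simp only: left right)
qed

lemma shift_power_mul_eq_0:
  assumes "(shift g ^^ a) x = 0" "(shift h ^^ b) y = 0"
  shows "(shift (\<delta> * g + \<gamma> * h) ^^ (a + b)) (mul x y) = 0"
  using assms
proof (induction "a + b" arbitrary: a b x y)
  case 0
  then show ?case by (simp add: mul_zero_left)
next
  case (Suc n)
  show ?case
  proof (cases "a = 0 \<or> b = 0")
    case True
    then have "mul x y = 0" using Suc.prems by (auto simp: mul_zero_left mul_zero_right)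
    then show ?thesis by (simp add: shift_power_0)
  next
    case False
    then obtain a' b' where a': "a = Suc a'" and b': "b = Suc b'" by (metis not0_implies_Suc)
    let ?k = "\<delta> * g + \<gamma> * h"
    have "(shift g ^^ a') (shift g x) = 0" using Suc.prems(1) unfolding a' shift_power_Suc .
    then have left: "(shift ?k ^^ n) (mul (shift g x) y) = 0"
      using Suc.hyps Suc.prems(2) a' by fastforce
    have "(shift h ^^ b') (shift h y) = 0" using Suc.prems(2) unfolding b' shift_power_Suc .
    then have right: "(shift ?k ^^ n) (mul x (shift h y)) = 0"
      using Suc.hyps Suc.prems(1) b' by fastforce
    have "(shift ?k ^^ n) (shift ?k (mul x y)) = 0"
      using left right by (simp add: shift_mul shift_power_add shift_power_scale)
    then show ?thesis unfolding Suc.hyps(2)[symmetric] shift_power_Suc .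
  qed
qed

lemma mul_gen_eigenspace:
  "x \<in> gen_eigenspace scale D g \<Longrightarrow> y \<in> gen_eigenspace scale D h \<Longrightarrow>
    mul x y \<in> gen_eigenspace scale D (\<delta> * g + \<gamma> * h)"
  using shift_power_mul_eq_0 by (meson mem_gen_eigenspace_iff)

lemma subsp_prod_gen_eigenspaces:
  "subsp_prod scale mul (gen_eigenspace scale D g) (gen_eigenspace scale D h)
    \<subseteq> gen_eigenspace scale D (\<delta> * g + \<gamma> * h)"
  unfolding subsp_prod_def
  by (rule span_minimal) (auto intro: mul_gen_eigenspace subspace_gen_eigenspace)

lemma subsp_prod_gen_eigenspaces_nonzero:
  assumes "subsp_prod scale mul (gen_eigenspace scale D g) (gen_eigenspace scale D h) \<noteq> {0}"
  shows root_subsp_prod_gen_eigenspaces: "\<delta> * g + \<gamma> * h \<in> roots scale D"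
    and eq_if_subsp_prod_gen_eigenspaces_subset:
      "subsp_prod scale mul (gen_eigenspace scale D g) (gen_eigenspace scale D h)
         \<subseteq> gen_eigenspace scale D k \<Longrightarrow> k = \<delta> * g + \<gamma> * h"
proof -
  have "0 \<in> subsp_prod scale mul (gen_eigenspace scale D g) (gen_eigenspace scale D h)"
    unfolding subsp_prod_def by (rule span_zero)
  then obtain w where w: "w \<in> subsp_prod scale mul (gen_eigenspace scale D g) (gen_eigenspace scale D h)" "w \<noteq> 0"
    using assms by blast
  then have w_gen: "w \<in> gen_eigenspace scale D (\<delta> * g + \<gamma> * h)"
    using subsp_prod_gen_eigenspaces by blast
  then show "\<delta> * g + \<gamma> * h \<in> roots scale D" using root_if_gen_eigenspace w(2) by blast
  assume "subsp_prod scale mul (gen_eigenspace scale D g) (gen_eigenspace scale D h)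
    \<subseteq> gen_eigenspace scale D k"
  then show "k = \<delta> * g + \<gamma> * h" using w gen_eigenspace_disjoint[OF _ w_gen] by blast
qed

lemma is_grading_gen_eigenspaces:
  assumes "alg_closed TYPE('k)" "finite B" "span B = UNIV"
  shows "is_grading scale mul (roots scale D) (gen_eigenspace scale D)"
  unfolding is_grading_def
proof (intro conjI ballI allI impI)
  fix g h assume "g \<in> roots scale D" "h \<in> roots scale D"
    "subsp_prod scale mul (gen_eigenspace scale D g) (gen_eigenspace scale D h) \<noteq> {0}"
  then show "\<exists>k\<in>roots scale D.
    subsp_prod scale mul (gen_eigenspace scale D g) (gen_eigenspace scale D h) \<subseteq> gen_eigenspace scale D k"
    using root_subsp_prod_gen_eigenspaces subsp_prod_gen_eigenspaces by blast
qed (use subspace_gen_eigenspace span_gen_eigenspaces[OF assms] gen_eigenspaces_independent in auto)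

end

lemma not_realized_in_semigroup_if_nonassociative:
  fixes scale :: "'k::field \<Rightarrow> 'a::ab_group_add \<Rightarrow> 'a" and mul :: "'a \<Rightarrow> 'a \<Rightarrow> 'a"
    and V :: "'g \<Rightarrow> 'a set" and P :: "'g \<Rightarrow> 'g \<Rightarrow> 'a set"
  defines "P g h \<equiv> subsp_prod scale mul (V g) (V h)"
  assumes "{g, h, k, gh, hk, p, q} \<subseteq> G" "p \<noteq> q"
    and "P g h \<noteq> {0}" "P g h \<subseteq> V gh" "P gh k \<noteq> {0}" "P gh k \<subseteq> V p"
    and "P h k \<noteq> {0}" "P h k \<subseteq> V hk" "P g hk \<noteq> {0}" "P g hk \<subseteq> V q"
  shows "\<not> realized_in_semigroup scale mul G V S op \<phi>"
proof
  assume "realized_in_semigroup scale mul G V S op \<phi>"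
  then have "is_semigroup S op" "inj_on \<phi> G" "\<phi> ` G \<subseteq> S"
    and hom: "\<forall>a\<in>G. \<forall>b\<in>G. \<forall>c\<in>G. P a b \<noteq> {0} \<and> P a b \<subseteq> V c \<longrightarrow> \<phi> c = op (\<phi> a) (\<phi> b)"
    unfolding realized_in_semigroup_def P_def by auto
  have G: "g \<in> G" "h \<in> G" "k \<in> G" "gh \<in> G" "hk \<in> G" "p \<in> G" "q \<in> G"
    using assms(2) by auto
  have "\<phi> p = op (\<phi> gh) (\<phi> k)" "\<phi> gh = op (\<phi> g) (\<phi> h)"
    "\<phi> q = op (\<phi> g) (\<phi> hk)" "\<phi> hk = op (\<phi> h) (\<phi> k)"
    using hom G assms(4-11) by blast+
  moreover have "\<phi> g \<in> S" "\<phi> h \<in> S" "\<phi> k \<in> S" using G \<open>\<phi> ` G \<subseteq> S\<close> by auto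
  ultimately have "\<phi> p = \<phi> q" using \<open>is_semigroup S op\<close> by (simp add: is_semigroup_def)
  then show False using \<open>inj_on \<phi> G\<close> G assms(3) by (auto dest: inj_onD)
qed

theorem mainTheorem2:
  fixes scale :: "'k::field \<Rightarrow> 'a::ab_group_add \<Rightarrow> 'a"
    and mul :: "'a \<Rightarrow> 'a \<Rightarrow> 'a"
    and D :: "'a \<Rightarrow> 'a"
    and \<delta> \<gamma> lam \<mu> \<eta> \<theta> \<xi> :: 'k
  assumes "alg_closed TYPE('k)"
    and "fin_dim_vs scale"
    and "bilinear_mult scale mul"
    and "dg_derivation scale mul \<delta> \<gamma> D"
    and "lam \<in> roots scale D" "\<mu> \<in> roots scale D" "\<eta> \<in> roots scale D"
        "\<theta> \<in> roots scale D" "\<xi> \<in> roots scale D"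
    and "subsp_prod scale mul (gen_eigenspace scale D lam) (gen_eigenspace scale D \<eta>) \<noteq> {0}"
    and "subsp_prod scale mul (gen_eigenspace scale D lam) (gen_eigenspace scale D \<eta>)
           \<subseteq> gen_eigenspace scale D \<theta>"
    and "subsp_prod scale mul (gen_eigenspace scale D \<theta>) (gen_eigenspace scale D \<mu>) \<noteq> {0}"
    and "subsp_prod scale mul (gen_eigenspace scale D \<eta>) (gen_eigenspace scale D \<mu>) \<noteq> {0}"
    and "subsp_prod scale mul (gen_eigenspace scale D \<eta>) (gen_eigenspace scale D \<mu>)
           \<subseteq> gen_eigenspace scale D \<xi>"
    and "subsp_prod scale mul (gen_eigenspace scale D lam) (gen_eigenspace scale D \<xi>) \<noteq> {0}"
    and "(\<delta>\<^sup>2 - \<delta>) * lam \<noteq> (\<gamma>\<^sup>2 - \<gamma>) * \<mu>"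
  shows "is_grading scale mul (roots scale D) (gen_eigenspace scale D) \<and>
    (\<forall>(S :: 's set) op \<phi>. \<not> realized_in_semigroup scale mul (roots scale D)
        (gen_eigenspace scale D) S op \<phi>)"
proof -
  obtain B where "vector_space scale" "finite B" "module.span scale B = UNIV"
    using assms(2) unfolding fin_dim_vs_def by blast
  interpret dg_derivation_algebra scale mul \<delta> \<gamma> D
    using \<open>vector_space scale\<close> assms(3,4)
    by (intro dg_derivation_algebra.intro dg_derivation_algebra_axioms.intro)
  have \<theta>: "\<theta> = \<delta> * lam + \<gamma> * \<eta>"
    using eq_if_subsp_prod_gen_eigenspaces_subset assms(10,11) by blast
  have \<xi>: "\<xi> = \<delta> * \<eta> + \<gamma> * \<mu>"
    using eq_if_subsp_prod_gen_eigenspaces_subset assms(13,14) by blast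
  have nonassociative: "\<delta> * \<theta> + \<gamma> * \<mu> \<noteq> \<delta> * lam + \<gamma> * \<xi>"
    using assms(16) unfolding \<theta> \<xi> by (auto simp: power2_eq_square algebra_simps)
  have "\<delta> * \<theta> + \<gamma> * \<mu> \<in> roots scale D" "\<delta> * lam + \<gamma> * \<xi> \<in> roots scale D"
    using root_subsp_prod_gen_eigenspaces assms(12,15) by blast+
  then have "\<not> realized_in_semigroup scale mul (roots scale D) (gen_eigenspace scale D) S op \<phi>"
    for S :: "'s set" and op \<phi>
    using assms(5-9)
    by (intro not_realized_in_semigroup_if_nonassociative[where V = "gen_eigenspace scale D",
          OF _ nonassociative assms(10-12) subsp_prod_gen_eigenspaces assms(13-15)
          subsp_prod_gen_eigenspaces]) simp
  then show ?thesis
    using is_grading_gen_eigenspaces[OF assms(1) \<open>finite B\<close> \<open>module.span scale B = UNIV\<close>] by blast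
qed

end
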